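(* Consider the directed $(m,h)$-CCN with a $1$-node passive adversary. In each of the following cases there is a protocol satisfying decodability and secrecy that achieves secrecy rate exactly $\frac{(h-1)^2}{h}$ (hence matching the outer bound $\frac{(h-1)^2}{h}$): (i) $h=2$ and any $m\ge 3$ (rate $\tfrac12$); (ii) $m=h+1$ for any $h\ge 2$; (iii) $h=3$ and $m\in\{4,5,6\}$ (rate $\tfrac43$).
   Context: Network model: a graph with unit-capacity edges; each use of an edge carries one symbol of a finite field $\mathbb{F}$, and entropies are measured in units of $\log|\mathbb{F}|$. A single source $S$ holds a message $\mathcal{W}$ to be multicast to a set of receivers. Each node may use its own private randomness; nodes share no prior common randomness and no side channel. An $N$-round protocol: in each round every edge is used at most once. Decodability: every receiver recovers $\mathcal{W}$ with zero error. Secrecy: $H(\mathcal{W}\mid \mathcal{V}_{\mathcal{A}})=H(\mathcal{W})$, where $\mathcal{V}_{\mathcal{A}}$ is the adversary's view over the whole protocol. The secrecy rate is $H(\mathcal{W})/N$; a rate is achievable if some protocol attains it. A $1$-node passive adversary may choose any single node other than the source and the receivers and observes all values delivered to that node; secrecy must hold for every such choice. Directed $(m,h)$-CCN ($m\ge h$): nodes $S$, $S_1,\dots,S_h$, $A_1,\dots,A_m$, $B_1,\dots,B_m$, and $\binom{m}{h}$ receivers, one per $h$-subset of $\{B_1,\dots,B_m\}$. Directed edges: $S\to S_i$ ($1\le i\le h$); $S_i\to A_i$ ($1\le i\le h$); $S_i\to A_j$ for all $1\le i\le h$, $h<j\le m$; $A_j\to B_j$ ($1\le j\le m$); $B_j\to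 R$ whenever $B_j$ is in the $h$-subset of receiver $R$. *)

theory Defs
  imports "HOL-Probability.Product_PMF"
begin

datatype node = Src | SS nat | AA nat | BB nat | Rcv "nat set"

type_synonym edge = "node \<times> node"

definition receiver_sets :: "nat \<Rightarrow> nat \<Rightarrow> nat set set" where
  "receiver_sets m h = {T. T \<subseteq> {1..m} \<and> card T = h}"

definition ccn_nodes :: "nat \<Rightarrow> nat \<Rightarrow> node set" where
  "ccn_nodes m h = {Src} \<union> SS ` {1..h} \<union> AA ` {1..m} \<union> BB ` {1..m}
                    \<union> Rcv ` receiver_sets m h"

definition ccn_edges :: "nat \<Rightarrow> nat \<Rightarrow> edge set" where
  "ccn_edges m h =
     {(Src, SS i) | i. 1 \<le> i \<and> i \<le> h}
   \<union> {(SS i, AA i) | i. 1 \<le> i \<and> i \<le> h}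
   \<union> {(SS i, AA j) | i j. 1 \<le> i \<and> i \<le> h \<and> h < j \<and> j \<le> m}
   \<union> {(AA j, BB j) | j. 1 \<le> j \<and> j \<le> m}
   \<union> {(BB j, Rcv T) | j T. T \<in> receiver_sets m h \<and> j \<in> T}"

definition adversary_nodes :: "nat \<Rightarrow> nat \<Rightarrow> node set" where
  "adversary_nodes m h = SS ` {1..h} \<union> AA ` {1..m} \<union> BB ` {1..m}"

text \<open>Values delivered to node v: the symbol sequences (one symbol per round) on its incoming edges.\<close>
definition inputs :: "edge set \<Rightarrow> node \<Rightarrow> (edge \<Rightarrow> nat list) \<Rightarrow> (edge \<Rightarrow> nat list option)" where
  "inputs E v X = (\<lambda>e. if e \<in> E \<and> snd e = v then Some (X e) else None)"

text \<open>Local knowledge of a node: the message (source only), its private randomness,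
  and everything delivered to it.\<close>
type_synonym local_view = "nat option \<times> nat \<times> (edge \<Rightarrow> nat list option)"

record protocol =
  msg_dist  :: "nat pmf"
  rand_dist :: "node \<Rightarrow> nat pmf"
  enc       :: "edge \<Rightarrow> local_view \<Rightarrow> nat list"
  dec       :: "node \<Rightarrow> nat \<times> (edge \<Rightarrow> nat list option) \<Rightarrow> nat"

definition local_view :: "edge set \<Rightarrow> node \<Rightarrow> nat \<Rightarrow> (node \<Rightarrow> nat) \<Rightarrow> (edge \<Rightarrow> nat list) \<Rightarrow> local_view" where
  "local_view E u w r X = (if u = Src then Some w else None, r u, inputs E u X)"

text \<open>Execution: the (unique, the network being acyclic) assignment of symbol sequences to edges
  consistent with the encoding functions.\<close>
definition exec :: "nat \<Rightarrow> nat \<Rightarrow> protocol \<Rightarrow> nat \<Rightarrow> (node \<Rightarrow> nat) \<Rightarrow> (edge \<Rightarrow> nat list)" where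
  "exec m h P w r = (THE X. (\<forall>e\<in>ccn_edges m h. X e = enc P e (local_view (ccn_edges m h) (fst e) w r X))
                          \<and> (\<forall>e. e \<notin> ccn_edges m h \<longrightarrow> X e = []))"

definition omega :: "nat \<Rightarrow> nat \<Rightarrow> protocol \<Rightarrow> (nat \<times> (node \<Rightarrow> nat)) pmf" where
  "omega m h P = pair_pmf (msg_dist P) (Pi_pmf (ccn_nodes m h) 0 (rand_dist P))"

definition pmf_entropy :: "real \<Rightarrow> 'a pmf \<Rightarrow> real" where
  "pmf_entropy b p = - (\<Sum>x\<in>set_pmf p. pmf p x * log b (pmf p x))"

definition ent :: "real \<Rightarrow> 'o pmf \<Rightarrow> ('o \<Rightarrow> 'a) \<Rightarrow> real" where
  "ent b \<Omega> f = pmf_entropy b (map_pmf f \<Omega>)"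

definition cond_ent :: "real \<Rightarrow> 'o pmf \<Rightarrow> ('o \<Rightarrow> 'a) \<Rightarrow> ('o \<Rightarrow> 'c) \<Rightarrow> real" where
  "cond_ent b \<Omega> f g = ent b \<Omega> (\<lambda>z. (f z, g z)) - ent b \<Omega> g"

definition is_field_size :: "nat \<Rightarrow> bool" where
  "is_field_size q \<longleftrightarrow> (\<exists>p k. prime p \<and> k \<ge> 1 \<and> q = p ^ k)"

definition adversary_view :: "nat \<Rightarrow> nat \<Rightarrow> protocol \<Rightarrow> node \<Rightarrow> nat \<times> (node \<Rightarrow> nat) \<Rightarrow> (edge \<Rightarrow> nat list option)" where
  "adversary_view m h P a = (\<lambda>(w, r). inputs (ccn_edges m h) a (exec m h P w r))"

definition secure_protocol :: "nat \<Rightarrow> nat \<Rightarrow> nat \<Rightarrow> nat \<Rightarrow> protocol \<Rightarrow> bool" where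
  "secure_protocol m h q N P \<longleftrightarrow>
     N \<ge> 1
   \<and> finite (set_pmf (msg_dist P))
   \<and> (\<forall>v\<in>ccn_nodes m h. finite (set_pmf (rand_dist P v)))
   \<comment> \<open>each edge carries one field symbol per round, N rounds\<close>
   \<and> (\<forall>e\<in>ccn_edges m h. \<forall>x. length (enc P e x) = N \<and> set (enc P e x) \<subseteq> {..<q})
   \<comment> \<open>decodability with zero error\<close>
   \<and> (\<forall>T\<in>receiver_sets m h. \<forall>(w, r)\<in>set_pmf (omega m h P).
        dec P (Rcv T) (r (Rcv T), inputs (ccn_edges m h) (Rcv T) (exec m h P w r)) = w)
   \<comment> \<open>secrecy against every 1-node passive adversary\<close>
   \<and> (\<forall>a\<in>adversary_nodes m h.
        cond_ent (real q) (omega m h P) fst (adversary_view m h P a) = ent (real q) (omega m h P) fst)"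

definition secrecy_rate :: "nat \<Rightarrow> nat \<Rightarrow> nat \<Rightarrow> nat \<Rightarrow> protocol \<Rightarrow> real" where
  "secrecy_rate m h q N P = ent (real q) (omega m h P) fst / real N"

end

theory Submission
  imports Defs "HOL-Computational_Algebra.Primes"
begin

(* All protocols here are forwarding schemes in which only the source is randomised: it
   draws a uniform message of K field symbols and a uniform key of L symbols, the relays
   S_i and A_j apply fixed maps and the B_j forward.  After the entropy facts (a view whose
   distribution does not depend on the message leaves H(W) unchanged), "secure protocol of
   rate K/N" is reduced to two combinatorial conditions: the A-outputs seen by each receiver
   determine the message, and every adversary view of a message equals the view of the zero
   message under a bijective re-keying.  The share scheme (N = h, K = (h-1)^2, L = h; S_i
   gets k_(i-1) and a masked share of the message, A_(h+1) learns the key) meets both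
   conditions on S_1..S_h and A_1..A_(h+1), which gives case (ii).  Suitable combinations
   sent to A_j, j > h+1, for h = 2 over a prime field larger than m and for h = 3, m <= 6
   over GF(2) give cases (i) and (iii); the main theorem combines the three cases. *)

section \<open>Entropy of messages and views\<close>

lemma pmf_entropy_pair:
  assumes "finite (set_pmf M)" "finite (set_pmf D)"
  shows "pmf_entropy b (pair_pmf M D) = pmf_entropy b M + pmf_entropy b D"
proof -
  have sM: "sum (pmf M) (set_pmf M) = 1" by (rule sum_pmf_eq_1) (use assms in auto)
  have sD: "sum (pmf D) (set_pmf D) = 1" by (rule sum_pmf_eq_1) (use assms in auto)
  have "(\<Sum>z\<in>set_pmf (pair_pmf M D). pmf (pair_pmf M D) z * log b (pmf (pair_pmf M D) z))
      = (\<Sum>x\<in>set_pmf M. \<Sum>y\<in>set_pmf D. pmf M x * pmf D y * (log b (pmf M x) + log b (pmf D y)))"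
    unfolding set_pair_pmf sum.cartesian_product
    by (intro sum.cong refl) (auto simp: pmf_pair log_mult pmf_positive)
  also have "\<dots> = (\<Sum>x\<in>set_pmf M. pmf M x * log b (pmf M x) * (\<Sum>y\<in>set_pmf D. pmf D y))
       + (\<Sum>y\<in>set_pmf D. pmf D y * log b (pmf D y)) * (\<Sum>x\<in>set_pmf M. pmf M x)"
    by (simp add: sum_distrib_left sum_distrib_right sum.distrib algebra_simps sum.swap[of _ "set_pmf D"])
  finally show ?thesis unfolding pmf_entropy_def using sM sD by simp
qed

lemma pmf_entropy_uniform:
  assumes "finite S" "S \<noteq> {}"
  shows "pmf_entropy b (pmf_of_set S) = log b (real (card S))"
proof -
  have c: "card S > 0" using assms by (simp add: card_gt_0_iff)
  have "pmf_entropy b (pmf_of_set S) = - (\<Sum>x\<in>S. (1 / real (card S)) * log b (1 / real (card S)))"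
    unfolding pmf_entropy_def using assms by (intro arg_cong[where f=uminus] sum.cong) auto
  also have "\<dots> = - log b (1 / real (card S))" using c by simp
  also have "\<dots> = log b (real (card S))" using c by (simp add: log_def ln_div)
  finally show ?thesis .
qed

lemma cond_ent_message_independent_view:
  fixes M :: "'w pmf" and R :: "'r pmf" and V :: "'w \<times> 'r \<Rightarrow> 'v"
  assumes fM: "finite (set_pmf M)" and fD: "finite (set_pmf D)"
    and same: "\<And>w. w \<in> set_pmf M \<Longrightarrow> map_pmf (\<lambda>r. V (w, r)) R = D"
  shows "cond_ent b (pair_pmf M R) fst V = ent b (pair_pmf M R) fst"
proof -
  have as_bind: "pair_pmf M' D' = bind_pmf M' (\<lambda>w. map_pmf (Pair w) D')" for M' :: "'w pmf" and D' :: "'x pmf"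
    by (simp add: pair_pmf_def map_pmf_def)
  have joint: "map_pmf (\<lambda>z. (fst z, V z)) (pair_pmf M R) = pair_pmf M D"
  proof -
    have "map_pmf (\<lambda>z. (fst z, V z)) (pair_pmf M R)
       = bind_pmf M (\<lambda>w. map_pmf (Pair w) (map_pmf (\<lambda>r. V (w, r)) R))"
      unfolding as_bind map_bind_pmf by (simp add: pmf.map_comp o_def)
    also have "\<dots> = bind_pmf M (\<lambda>w. map_pmf (Pair w) D)"
      by (intro bind_pmf_cong refl) (simp add: same)
    finally show ?thesis by (simp add: as_bind)
  qed
  have view: "map_pmf V (pair_pmf M R) = D"
  proof -
    have "map_pmf V (pair_pmf M R) = map_pmf snd (map_pmf (\<lambda>z. (fst z, V z)) (pair_pmf M R))"
      by (simp add: pmf.map_comp o_def)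
    then show ?thesis using joint by (simp add: map_snd_pair_pmf)
  qed
  show ?thesis unfolding cond_ent_def ent_def joint view map_fst_pair_pmf
    using pmf_entropy_pair[OF fM fD] by simp
qed

section \<open>Keyed forwarding schemes\<close>

definition symbols :: "nat \<Rightarrow> nat \<Rightarrow> nat list \<Rightarrow> nat list" where
  "symbols q N l = map (\<lambda>t. l ! t mod q) [0..<N]"

definition received :: "(edge \<Rightarrow> nat list option) \<Rightarrow> edge \<Rightarrow> nat list" where
  "received inp e = (case inp e of Some l \<Rightarrow> l | None \<Rightarrow> [])"

lemma length_symbols [simp]: "length (symbols q N l) = N"
  by (simp add: symbols_def)

lemma symbols_idem [simp]: "symbols q N (symbols q N l) = symbols q N l"
  by (simp add: symbols_def)

text \<open>Message and key are read off the source's local view through the list encoding from_nat.\<close>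
fun ccn_enc :: "nat \<Rightarrow> nat \<Rightarrow> (nat \<Rightarrow> nat list \<times> nat list \<Rightarrow> nat list) \<Rightarrow> (nat \<Rightarrow> nat \<Rightarrow> nat list \<Rightarrow> nat list)
   \<Rightarrow> (nat \<Rightarrow> (nat \<Rightarrow> nat list) \<Rightarrow> nat list) \<Rightarrow> edge \<Rightarrow> local_view \<Rightarrow> nat list" where
  "ccn_enc q N xs sa ab (Src, SS i) (wo, x, inp) =
     symbols q N (xs i (from_nat (case wo of Some w \<Rightarrow> w | None \<Rightarrow> 0), from_nat x))"
| "ccn_enc q N xs sa ab (SS i, AA j) (wo, x, inp) = symbols q N (sa i j (received inp (Src, SS i)))"
| "ccn_enc q N xs sa ab (AA j, BB j') (wo, x, inp) = symbols q N (ab j (\<lambda>i. received inp (SS i, AA j)))"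
| "ccn_enc q N xs sa ab (BB j, Rcv T) (wo, x, inp) = symbols q N (received inp (AA j, BB j))"
| "ccn_enc q N xs sa ab _ _ = []"

text \<open>A keyed forwarding scheme with N rounds, a uniform message of K field symbols and a
  uniform key of L field symbols held by the source.\<close>
locale keyed_scheme =
  fixes m h q N K L :: nat
    and xs :: "nat \<Rightarrow> nat list \<times> nat list \<Rightarrow> nat list"
    and sa :: "nat \<Rightarrow> nat \<Rightarrow> nat list \<Rightarrow> nat list"
    and ab :: "nat \<Rightarrow> (nat \<Rightarrow> nat list) \<Rightarrow> nat list"
  assumes q_gt_1: "q > 1" and N_pos: "N \<ge> 1"
begin

abbreviation "E \<equiv> ccn_edges m h"

definition out_S :: "nat \<Rightarrow> nat list \<times> nat list \<Rightarrow> nat list" where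
  "out_S i d = symbols q N (xs i d)"
definition out_SA :: "nat \<Rightarrow> nat \<Rightarrow> nat list \<times> nat list \<Rightarrow> nat list" where
  "out_SA i j d = symbols q N (sa i j (out_S i d))"
definition out_A :: "nat \<Rightarrow> nat list \<times> nat list \<Rightarrow> nat list" where
  "out_A j d = symbols q N (ab j (\<lambda>i. if (SS i, AA j) \<in> E then out_SA i j d else []))"

fun flow_on :: "nat list \<times> nat list \<Rightarrow> edge \<Rightarrow> nat list" where
  "flow_on d (Src, SS i) = out_S i d"
| "flow_on d (SS i, AA j) = out_SA i j d"
| "flow_on d (AA j, BB j') = out_A j d"
| "flow_on d (BB j, Rcv T) = out_A j d"
| "flow_on d _ = []"

definition flow :: "nat list \<times> nat list \<Rightarrow> edge \<Rightarrow> nat list" where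
  "flow d e = (if e \<in> E then flow_on d e else [])"

definition Msgs :: "nat list set" where "Msgs = {l. set l \<subseteq> {..<q} \<and> length l = K}"
definition Keys :: "nat list set" where "Keys = {l. set l \<subseteq> {..<q} \<and> length l = L}"

definition decoder :: "node \<Rightarrow> nat \<times> (edge \<Rightarrow> nat list option) \<Rightarrow> nat" where
  "decoder v z = (case v of
      Rcv T \<Rightarrow> (SOME w. \<exists>wl\<in>Msgs. \<exists>kl\<in>Keys. w = to_nat wl \<and> inputs E (Rcv T) (flow (wl, kl)) = snd z)
    | _ \<Rightarrow> 0)"

definition prot :: protocol where
  "prot = \<lparr> msg_dist = pmf_of_set (to_nat ` Msgs),
            rand_dist = (\<lambda>v. if v = Src then pmf_of_set (to_nat ` Keys) else return_pmf 0),
            enc = ccn_enc q N xs sa ab, dec = decoder \<rparr>"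

definition decodable :: bool where
  "decodable \<longleftrightarrow> (\<forall>T\<in>receiver_sets m h. \<forall>d d'. fst d \<in> Msgs \<and> snd d \<in> Keys \<and> fst d' \<in> Msgs
      \<and> snd d' \<in> Keys \<and> (\<forall>j\<in>T. out_A j d = out_A j d') \<longrightarrow> fst d = fst d')"

definition rekeyable :: "node \<Rightarrow> bool" where
  "rekeyable a \<longleftrightarrow> (\<forall>wl\<in>Msgs. \<exists>\<pi>. inj_on \<pi> Keys \<and> \<pi> ` Keys \<subseteq> Keys \<and>
      (\<forall>kl\<in>Keys. \<forall>e\<in>E. snd e = a \<longrightarrow> flow (wl, kl) e = flow (replicate K 0, \<pi> kl) e))"

lemma decodableD:
  assumes "decodable" "T \<in> receiver_sets m h" "wl \<in> Msgs" "kl \<in> Keys" "wl' \<in> Msgs" "kl' \<in> Keys"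
    and "\<forall>j\<in>T. out_A j (wl, kl) = out_A j (wl', kl')"
  shows "wl = wl'"
  using assms unfolding decodable_def by (metis fst_conv snd_conv)

lemma edges_cases:
  assumes "e \<in> E"
  obtains (S) i where "e = (Src, SS i)" "1 \<le> i" "i \<le> h"
  | (SA) i j where "e = (SS i, AA j)" "1 \<le> i" "i \<le> h" "i = j \<or> (h < j \<and> j \<le> m)"
  | (AB) j where "e = (AA j, BB j)" "1 \<le> j" "j \<le> m"
  | (BR) j T where "e = (BB j, Rcv T)" "T \<in> receiver_sets m h" "j \<in> T"
  using assms unfolding ccn_edges_def by blast

lemma edge_AB_of_BR: "T \<in> receiver_sets m h \<Longrightarrow> j \<in> T \<Longrightarrow> (AA j, BB j) \<in> E"
  unfolding ccn_edges_def receiver_sets_def by auto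

lemma edge_S_of_SA: "(SS i, AA j) \<in> E \<Longrightarrow> (Src, SS i) \<in> E"
  unfolding ccn_edges_def by auto

lemma received_inputs: "received (inputs E u X) e = (if e \<in> E \<and> snd e = u then X e else [])"
  by (simp add: received_def inputs_def)

lemma flow_is_execution:
  "e \<in> E \<Longrightarrow> flow (from_nat w, from_nat (r Src)) e
     = ccn_enc q N xs sa ab e (local_view E (fst e) w r (flow (from_nat w, from_nat (r Src))))"
proof (erule edges_cases)
  fix i assume "e = (Src, SS i)" "1 \<le> i" "i \<le> h"
  then show ?thesis by (simp add: flow_def local_view_def ccn_edges_def out_S_def)
next
  fix i j assume a: "e = (SS i, AA j)" "1 \<le> i" "i \<le> h" "i = j \<or> (h < j \<and> j \<le> m)"
  then have "e \<in> E" "(Src, SS i) \<in> E" by (auto simp: ccn_edges_def)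
  then show ?thesis using a by (simp add: flow_def local_view_def received_inputs out_SA_def)
next
  fix j assume a: "e = (AA j, BB j)" "1 \<le> j" "j \<le> m"
  then have "e \<in> E" by (auto simp: ccn_edges_def)
  then show ?thesis using a by (simp add: flow_def local_view_def received_inputs out_A_def cong: if_cong)
next
  fix j T assume a: "e = (BB j, Rcv T)" "T \<in> receiver_sets m h" "j \<in> T"
  then have "e \<in> E" "(AA j, BB j) \<in> E" using edge_AB_of_BR by (auto simp: ccn_edges_def)
  then show ?thesis using a by (simp add: flow_def local_view_def received_inputs out_A_def)
qed

text \<open>\<dots> and every execution equals the flow, since the network is layered.\<close>
lemma execution_is_flow:
  assumes X: "\<And>e. e \<in> E \<Longrightarrow> X e = ccn_enc q N xs sa ab e (local_view E (fst e) w r X)"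
    and off: "\<And>e. e \<notin> E \<Longrightarrow> X e = []"
  shows "X = flow (from_nat w, from_nat (r Src))"
proof
  let ?d = "(from_nat w, from_nat (r Src)) :: nat list \<times> nat list"
  have S: "X (Src, SS i) = out_S i ?d" if "(Src, SS i) \<in> E" for i
    using X[OF that] by (simp add: local_view_def out_S_def)
  have SA: "X (SS i, AA j) = out_SA i j ?d" if "(SS i, AA j) \<in> E" for i j
    using X[OF that] S[OF edge_S_of_SA[OF that]] edge_S_of_SA[OF that]
    by (simp add: local_view_def received_inputs out_SA_def)
  have A: "X (AA j, BB j) = out_A j ?d" if "(AA j, BB j) \<in> E" for j
  proof -
    have "X (AA j, BB j) = symbols q N (ab j (\<lambda>i. if (SS i, AA j) \<in> E then X (SS i, AA j) else []))"
      using X[OF that] by (simp add: local_view_def received_inputs)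
    also have "(\<lambda>i. if (SS i, AA j) \<in> E then X (SS i, AA j) else [])
             = (\<lambda>i. if (SS i, AA j) \<in> E then out_SA i j ?d else [])"
      using SA by auto
    finally show ?thesis by (simp add: out_A_def)
  qed
  fix e show "X e = flow ?d e"
  proof (cases "e \<in> E")
    case False then show ?thesis using off by (simp add: flow_def)
  next
    case True
    then show ?thesis
    proof (cases rule: edges_cases)
      case (BR j T)
      then have "(AA j, BB j) \<in> E" using edge_AB_of_BR by auto
      then show ?thesis using True BR X[OF True] A
        by (simp add: flow_def local_view_def received_inputs out_A_def)
    qed (use True S SA A in \<open>simp_all add: flow_def\<close>)
  qed
qed

lemma exec_prot: "exec m h prot w r = flow (from_nat w, from_nat (r Src))"
  unfolding exec_def
proof (rule the_equality)
  let ?X = "flow (from_nat w, from_nat (r Src))"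
  show "(\<forall>e\<in>E. ?X e = enc prot e (local_view E (fst e) w r ?X)) \<and> (\<forall>e. e \<notin> E \<longrightarrow> ?X e = [])"
    using flow_is_execution by (simp add: prot_def flow_def)
next
  fix X assume "(\<forall>e\<in>E. X e = enc prot e (local_view E (fst e) w r X)) \<and> (\<forall>e. e \<notin> E \<longrightarrow> X e = [])"
  then show "X = flow (from_nat w, from_nat (r Src))"
    by (intro execution_is_flow) (auto simp: prot_def)
qed

lemma finite_ccn_nodes: "finite (ccn_nodes m h)"
  unfolding ccn_nodes_def receiver_sets_def
  by (intro finite_UnI finite_imageI) (auto intro: finite_subset[of _ "Pow {1..m}"])

lemma Src_in_ccn_nodes: "Src \<in> ccn_nodes m h" by (simp add: ccn_nodes_def)

lemma finite_Msgs: "finite Msgs" unfolding Msgs_def by (rule finite_lists_length_eq) simp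
lemma finite_Keys: "finite Keys" unfolding Keys_def by (rule finite_lists_length_eq) simp
lemma Msgs_nonempty: "Msgs \<noteq> {}" using q_gt_1 by (auto simp: Msgs_def intro!: exI[of _ "replicate K 0"])
lemma Keys_nonempty: "Keys \<noteq> {}" using q_gt_1 by (auto simp: Keys_def intro!: exI[of _ "replicate L 0"])
lemma card_Msgs: "card Msgs = q ^ K" unfolding Msgs_def by (subst card_lists_length_eq) auto

lemma set_pmf_Keys [simp]: "set_pmf (pmf_of_set Keys) = Keys"
  using finite_Keys Keys_nonempty by simp

lemma set_msg_dist: "set_pmf (msg_dist prot) = to_nat ` Msgs"
  using finite_Msgs Msgs_nonempty by (simp add: prot_def)

lemma set_key_dist: "set_pmf (rand_dist prot Src) = to_nat ` Keys"
  using finite_Keys Keys_nonempty by (simp add: prot_def)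

lemma omega_support:
  assumes "(w, r) \<in> set_pmf (omega m h prot)"
  shows "from_nat w \<in> Msgs" "from_nat (r Src) \<in> Keys" "w = to_nat (from_nat w :: nat list)"
proof -
  have "w \<in> to_nat ` Msgs" using assms set_msg_dist by (auto simp: omega_def)
  then show "from_nat w \<in> Msgs" "w = to_nat (from_nat w :: nat list)" by auto
  have "r \<in> set_pmf (Pi_pmf (ccn_nodes m h) 0 (rand_dist prot))" using assms by (auto simp: omega_def)
  then have "r Src \<in> set_pmf (map_pmf (\<lambda>f. f Src) (Pi_pmf (ccn_nodes m h) 0 (rand_dist prot)))" by auto
  then have "r Src \<in> to_nat ` Keys"
    by (simp add: Pi_pmf_component[OF finite_ccn_nodes] Src_in_ccn_nodes set_key_dist)
  then show "from_nat (r Src) \<in> Keys" by auto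
qed

lemma key_distribution:
  "map_pmf (\<lambda>r. from_nat (r Src) :: nat list) (Pi_pmf (ccn_nodes m h) 0 (rand_dist prot)) = pmf_of_set Keys"
proof -
  have "map_pmf (\<lambda>r. from_nat (r Src) :: nat list) (Pi_pmf (ccn_nodes m h) 0 (rand_dist prot))
      = map_pmf from_nat (map_pmf (\<lambda>r. r Src) (Pi_pmf (ccn_nodes m h) 0 (rand_dist prot)))"
    by (simp add: pmf.map_comp o_def)
  also have "\<dots> = map_pmf from_nat (pmf_of_set (to_nat ` Keys))"
    by (simp add: Pi_pmf_component[OF finite_ccn_nodes] Src_in_ccn_nodes prot_def)
  also have "pmf_of_set (to_nat ` Keys) = map_pmf to_nat (pmf_of_set Keys)"
    using finite_Keys Keys_nonempty by (subst map_pmf_of_set_inj) auto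
  finally show ?thesis by (simp add: pmf.map_comp o_def)
qed

lemma prot_symbols:
  "\<forall>e\<in>E. \<forall>x. length (enc prot e x) = N \<and> set (enc prot e x) \<subseteq> {..<q}"
proof (intro ballI allI)
  fix e and x :: local_view assume "e \<in> E"
  moreover obtain wo y inp where x: "x = (wo, y, inp)" by (cases x) auto
  have "set (symbols q N l) \<subseteq> {..<q}" for l using q_gt_1 by (auto simp: symbols_def)
  ultimately show "length (enc prot e x) = N \<and> set (enc prot e x) \<subseteq> {..<q}"
    by (cases rule: edges_cases) (auto simp: prot_def x)
qed

lemma prot_decodable:
  assumes dec: decodable
    and T: "T \<in> receiver_sets m h" and wr: "(w, r) \<in> set_pmf (omega m h prot)"
  shows "dec prot (Rcv T) (r (Rcv T), inputs E (Rcv T) (exec m h prot w r)) = w"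
proof -
  note supp = omega_support[OF wr]
  define wl :: "nat list" where "wl = from_nat w"
  define kl :: "nat list" where "kl = from_nat (r Src)"
  let ?explains = "\<lambda>w'. \<exists>wl'\<in>Msgs. \<exists>kl'\<in>Keys. w' = to_nat wl'
                          \<and> inputs E (Rcv T) (flow (wl', kl')) = inputs E (Rcv T) (flow (wl, kl))"
  have "dec prot (Rcv T) (r (Rcv T), inputs E (Rcv T) (exec m h prot w r)) = (SOME w'. ?explains w')"
    unfolding exec_prot by (simp add: prot_def decoder_def wl_def kl_def)
  also have "\<dots> = w"
  proof (rule someI2_ex)
    show "\<exists>w'. ?explains w'" using supp unfolding wl_def kl_def by blast
  next
    fix w' assume "?explains w'"
    then obtain wl' kl' where W: "wl' \<in> Msgs" "kl' \<in> Keys" "w' = to_nat wl'"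
      and I: "inputs E (Rcv T) (flow (wl', kl')) = inputs E (Rcv T) (flow (wl, kl))" by blast
    have "out_A j (wl', kl') = out_A j (wl, kl)" if j: "j \<in> T" for j
    proof -
      have e: "(BB j, Rcv T) \<in> E" using T j by (auto simp: ccn_edges_def)
      show ?thesis using fun_cong[OF I, of "(BB j, Rcv T)"] e by (simp add: inputs_def flow_def)
    qed
    then have "wl' = wl" using decodableD[OF dec T] W supp by (simp add: wl_def kl_def)
    then show "w' = w" using supp W by (simp add: wl_def)
  qed
  finally show ?thesis .
qed

lemma prot_secret:
  assumes sec: "rekeyable a"
  shows "cond_ent (real q) (omega m h prot) fst (adversary_view m h prot a) = ent (real q) (omega m h prot) fst"
proof -
  let ?R = "Pi_pmf (ccn_nodes m h) 0 (rand_dist prot)"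
  let ?view = "\<lambda>wl kl. inputs E a (flow (wl, kl))"
  define D where "D = map_pmf (?view (replicate K 0)) (pmf_of_set Keys)"
  have fin: "finite (set_pmf (msg_dist prot))" using set_msg_dist finite_Msgs by simp
  have fD: "finite (set_pmf D)" using finite_Keys by (simp add: D_def)
  show ?thesis unfolding omega_def
  proof (rule cond_ent_message_independent_view[OF fin fD])
    fix w assume "w \<in> set_pmf (msg_dist prot)"
    then have wl: "from_nat w \<in> Msgs" using set_msg_dist by auto
    obtain \<pi> where \<pi>: "inj_on \<pi> Keys" "\<pi> ` Keys \<subseteq> Keys"
      and eq: "\<forall>kl\<in>Keys. \<forall>e\<in>E. snd e = a \<longrightarrow> flow (from_nat w, kl) e = flow (replicate K 0, \<pi> kl) e"
      using sec wl unfolding rekeyable_def by blast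
    have \<pi>_onto: "\<pi> ` Keys = Keys" using endo_inj_surj[OF finite_Keys \<pi>(2) \<pi>(1)] .
    have "map_pmf (\<lambda>r. adversary_view m h prot a (w, r)) ?R
        = map_pmf (?view (from_nat w)) (map_pmf (\<lambda>r. from_nat (r Src) :: nat list) ?R)"
      by (simp add: adversary_view_def exec_prot pmf.map_comp o_def)
    also have "\<dots> = map_pmf (?view (from_nat w)) (pmf_of_set Keys)"
      by (simp add: key_distribution)
    also have "\<dots> = map_pmf (\<lambda>kl. ?view (replicate K 0) (\<pi> kl)) (pmf_of_set Keys)"
    proof (rule pmf.map_cong[OF refl])
      fix kl assume "kl \<in> set_pmf (pmf_of_set Keys)"
      then show "?view (from_nat w) kl = ?view (replicate K 0) (\<pi> kl)"
        using eq unfolding inputs_def by auto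
    qed
    also have "\<dots> = map_pmf (?view (replicate K 0)) (map_pmf \<pi> (pmf_of_set Keys))"
      by (simp add: pmf.map_comp o_def)
    also have "map_pmf \<pi> (pmf_of_set Keys) = pmf_of_set Keys"
      using map_pmf_of_set_inj[OF \<pi>(1)] finite_Keys Keys_nonempty \<pi>_onto by auto
    finally show "map_pmf (\<lambda>r. adversary_view m h prot a (w, r)) ?R = D" by (simp add: D_def)
  qed
qed

lemma prot_message_entropy: "ent (real q) (omega m h prot) fst = real K"
proof -
  have "ent (real q) (omega m h prot) fst = pmf_entropy (real q) (pmf_of_set (to_nat ` Msgs))"
    by (simp add: ent_def omega_def map_fst_pair_pmf prot_def)
  also have "\<dots> = log (real q) (real (card (to_nat ` Msgs)))"
    using finite_Msgs Msgs_nonempty by (intro pmf_entropy_uniform) auto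
  also have "card (to_nat ` Msgs) = q ^ K" using card_Msgs by (simp add: card_image)
  also have "log (real q) (real (q ^ K)) = real K" using q_gt_1 by (simp add: log_nat_power)
  finally show ?thesis .
qed

theorem keyed_scheme_secure:
  assumes dec: decodable and sec: "\<And>a. a \<in> adversary_nodes m h \<Longrightarrow> rekeyable a"
  shows "secure_protocol m h q N prot \<and> secrecy_rate m h q N prot = real K / real N"
proof -
  have "finite (set_pmf (msg_dist prot))" using set_msg_dist finite_Msgs by simp
  moreover have "\<forall>v\<in>ccn_nodes m h. finite (set_pmf (rand_dist prot v))"
    using set_key_dist finite_Keys by (simp add: prot_def)
  moreover have "\<forall>T\<in>receiver_sets m h. \<forall>(w, r)\<in>set_pmf (omega m h prot).
            dec prot (Rcv T) (r (Rcv T), inputs E (Rcv T) (exec m h prot w r)) = w"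
    using prot_decodable[OF dec] by blast
  moreover have "\<forall>a\<in>adversary_nodes m h.
      cond_ent (real q) (omega m h prot) fst (adversary_view m h prot a) = ent (real q) (omega m h prot) fst"
    using prot_secret sec by blast
  ultimately have "secure_protocol m h q N prot"
    unfolding secure_protocol_def using N_pos prot_symbols by blast
  then show ?thesis by (simp add: secrecy_rate_def prot_message_entropy)
qed

end

section \<open>The share scheme\<close>

lemma add_mod_cancel:
  assumes "(a + c) mod q = (b + c) mod (q::nat)" shows "a mod q = b mod q"
proof -
  have "(int a + int c) mod int q = (int b + int c) mod int q"
    using arg_cong[OF assms, of int] by (simp add: zmod_int)
  then have "(int a + int c - int c) mod int q = (int b + int c - int c) mod int q"
    by (rule mod_diff_cong) simp
  then have "int a mod int q = int b mod int q" by simp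
  then show ?thesis by (metis of_nat_eq_iff zmod_int)
qed

lemma nth_less_of_set: "set l \<subseteq> {..<q} \<Longrightarrow> c < length l \<Longrightarrow> l ! c < (q::nat)"
  by (meson lessThan_iff nth_mem subsetD)

lemma subset_misses_one:
  assumes T: "T \<subseteq> {1..h+1}" "card T = h" and h: "h \<ge> 1"
  obtains i0 where "1 \<le> i0" "i0 \<le> h" "\<And>l. 1 \<le> l \<Longrightarrow> l \<le> h \<Longrightarrow> l \<noteq> i0 \<Longrightarrow> l \<in> T"
proof -
  have "finite T" using T(1) finite_subset by blast
  then have "card ({1..h+1} - T) = card {1..h+1} - card T" by (rule card_Diff_subset[OF _ T(1)])
  then have "card ({1..h+1} - T) = 1" using T(2) by simp
  then obtain x where x: "{1..h+1} - T = {x}" by (meson card_1_singletonE)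
  have in_T: "l \<in> T" if "1 \<le> l" "l \<le> h + 1" "l \<noteq> x" for l
    using that x by (metis DiffI atLeastAtMost_iff singletonD)
  show ?thesis
  proof (cases "x = h + 1")
    case True
    show ?thesis by (rule that[of 1]) (use h in_T True in auto)
  next
    case False
    have "x \<in> {1..h+1}" using x by blast
    then have "1 \<le> x" "x \<le> h" using False by auto
    then show ?thesis by (intro that[of x]) (use in_T in auto)
  qed
qed

text \<open>skip i enumerates the key positions other than i - 1, the one S_i receives in clear.\<close>
definition skip :: "nat \<Rightarrow> nat \<Rightarrow> nat" where "skip i t = (if t + 1 < i then t else t + 1)"
definition unskip :: "nat \<Rightarrow> nat \<Rightarrow> nat" where "unskip i c = (if c + 1 < i then c else c - 1)"

lemma unskip_skip: "unskip i (skip i t) = t" by (simp add: skip_def unskip_def)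
lemma skip_ne: "i \<ge> 1 \<Longrightarrow> skip i t \<noteq> i - 1" unfolding skip_def by auto
lemma skip_less: "t + 1 < h \<Longrightarrow> skip i t < h" by (simp add: skip_def)

text \<open>The message is an (h-1) x (h-1) array, block b being the symbols b*(h-1) .. b*(h-1)+h-2.
  Share i < h is block i - 1; share h is the sum of all blocks.  Any h - 1 shares determine
  the message.\<close>
definition share :: "nat \<Rightarrow> nat list \<Rightarrow> nat \<Rightarrow> nat \<Rightarrow> nat" where
  "share h wl i t = (if i < h then wl ! ((i - 1) * (h - 1) + t) else (\<Sum>b<h - 1. wl ! (b * (h - 1) + t)))"

definition share_enc :: "nat \<Rightarrow> nat \<Rightarrow> nat list \<times> nat list \<Rightarrow> nat list" where
  "share_enc h i d = map (\<lambda>s. if s = 0 then snd d ! (i - 1)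
                           else share h (fst d) i (s - 1) + snd d ! skip i (s - 1)) [0..<h]"

text \<open>S_i sends its whole input to A_i and one linear combination to A_j, j > h;
  A_(h+1) gets the first symbol, i.e. the key, other A_j get the coefficients ext j i.\<close>
definition relay_coef :: "nat \<Rightarrow> (nat \<Rightarrow> nat \<Rightarrow> nat \<Rightarrow> nat) \<Rightarrow> nat \<Rightarrow> nat \<Rightarrow> nat \<Rightarrow> nat" where
  "relay_coef h ext j i s = (if j = h + 1 then (if s = 0 then 1 else 0) else ext j i s)"

definition share_relay :: "nat \<Rightarrow> (nat \<Rightarrow> nat \<Rightarrow> nat \<Rightarrow> nat) \<Rightarrow> nat \<Rightarrow> nat \<Rightarrow> nat list \<Rightarrow> nat list" where
  "share_relay h ext i j l = (if j \<le> h then l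
     else map (\<lambda>t. if t = 0 then (\<Sum>s<h. relay_coef h ext j i s * l ! s) else 0) [0..<h])"

definition share_combine :: "nat \<Rightarrow> nat \<Rightarrow> (nat \<Rightarrow> nat list) \<Rightarrow> nat list" where
  "share_combine h j g = (if j \<le> h then g j else map (\<lambda>t. g (t + 1) ! 0) [0..<h])"

definition shift_key :: "nat \<Rightarrow> (nat \<Rightarrow> nat) \<Rightarrow> nat list \<Rightarrow> nat list" where
  "shift_key q \<delta> kl = map (\<lambda>c. (kl ! c + \<delta> c) mod q) [0..<length kl]"

locale share_scheme =
  fixes m h q :: nat and ext :: "nat \<Rightarrow> nat \<Rightarrow> nat \<Rightarrow> nat"
  assumes q_nontrivial: "q > 1" and h_ge_2: "h \<ge> 2"
begin

sublocale keyed_scheme m h q h "(h - 1)^2" h "share_enc h" "share_relay h ext" "share_combine h"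
  using q_nontrivial h_ge_2 by unfold_locales auto

abbreviation zero_msg :: "nat list" where "zero_msg \<equiv> replicate ((h - 1)^2) 0"

definition comb :: "nat \<Rightarrow> nat \<Rightarrow> nat list \<times> nat list \<Rightarrow> nat" where
  "comb i j d = (\<Sum>s<h. relay_coef h ext j i s * (out_S i d ! s)) mod q"

definition comb_rekeyable :: "nat \<Rightarrow> bool" where
  "comb_rekeyable j \<longleftrightarrow> (\<forall>wl\<in>Msgs. \<exists>\<delta>. \<forall>kl\<in>Keys. \<forall>i. 1 \<le> i \<and> i \<le> h
      \<longrightarrow> comb i j (wl, kl) = comb i j (zero_msg, shift_key q \<delta> kl))"

lemma length_out_S [simp]: "length (out_S i d) = h" by (simp add: out_S_def)

lemma out_S_nth:
  "s < h \<Longrightarrow> out_S i d ! s = (if s = 0 then snd d ! (i - 1)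
                               else share h (fst d) i (s - 1) + snd d ! skip i (s - 1)) mod q"
  by (simp add: out_S_def share_enc_def symbols_def)

lemma out_SA_low: "j \<le> h \<Longrightarrow> out_SA i j d = out_S i d"
  by (simp add: out_SA_def share_relay_def out_S_def)

lemma out_SA_high: "h < j \<Longrightarrow> out_SA i j d = map (\<lambda>t. if t = 0 then comb i j d else 0) [0..<h]"
  by (simp add: out_SA_def share_relay_def symbols_def comb_def)

lemma out_A_low: "1 \<le> j \<Longrightarrow> j \<le> h \<Longrightarrow> out_A j d = out_S j d"
  by (simp add: out_A_def share_combine_def ccn_edges_def out_SA_low out_S_def)

lemma out_A_high: "h < j \<Longrightarrow> j \<le> m \<Longrightarrow> out_A j d = map (\<lambda>t. comb (t + 1) j d) [0..<h]"
proof -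
  assume j: "h < j" "j \<le> m"
  have "\<And>t. t < h \<Longrightarrow> (SS (t + 1), AA j) \<in> E" using j by (auto simp: ccn_edges_def)
  then show ?thesis using j h_ge_2 by (simp add: out_A_def share_combine_def out_SA_high symbols_def comb_def)
qed

lemma Msgs_nth: "wl \<in> Msgs \<Longrightarrow> n < (h - 1)^2 \<Longrightarrow> wl ! n < q"
  unfolding Msgs_def by (auto intro!: nth_less_of_set)

lemma Keys_nth: "kl \<in> Keys \<Longrightarrow> n < h \<Longrightarrow> kl ! n < q"
  unfolding Keys_def by (auto intro!: nth_less_of_set)

lemma Keys_eqI: "kl \<in> Keys \<Longrightarrow> kl' \<in> Keys \<Longrightarrow> (\<And>t. t < h \<Longrightarrow> kl ! t = kl' ! t) \<Longrightarrow> kl = kl'"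
  by (rule nth_equalityI) (auto simp: Keys_def)

lemma msg_index_less: "b < h - 1 \<Longrightarrow> t < h - 1 \<Longrightarrow> b * (h - 1) + t < (h - 1)^2"
proof -
  assume a: "b < h - 1" "t < h - 1"
  have "b * (h - 1) + t < b * (h - 1) + (h - 1)" using a by simp
  also have "\<dots> = (b + 1) * (h - 1)" by simp
  also have "\<dots> \<le> (h - 1) * (h - 1)" using a by (intro mult_right_mono) auto
  finally show ?thesis by (simp add: power2_eq_square)
qed

lemma Msgs_eqI:
  assumes wl: "wl \<in> Msgs" "wl' \<in> Msgs"
    and blocks: "\<And>b t. b < h - 1 \<Longrightarrow> t < h - 1 \<Longrightarrow> wl ! (b * (h - 1) + t) = wl' ! (b * (h - 1) + t)"
  shows "wl = wl'"
proof (rule nth_equalityI)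
  show "length wl = length wl'" using wl unfolding Msgs_def by simp
  fix n assume "n < length wl"
  then have n: "n < (h - 1) * (h - 1)" using wl unfolding Msgs_def by (simp add: power2_eq_square)
  have "n div (h - 1) < h - 1" using n h_ge_2 by (simp add: div_less_iff_less_mult)
  moreover have "n mod (h - 1) < h - 1" using h_ge_2 by simp
  ultimately show "wl ! n = wl' ! n" using blocks div_mult_mod_eq[of n "h - 1"] by metis
qed

lemma share_zero_msg: "1 \<le> i \<Longrightarrow> i \<le> h \<Longrightarrow> t < h - 1 \<Longrightarrow> share h zero_msg i t = 0"
  using msg_index_less[of "i - 1" t] msg_index_less[of _ t] by (auto simp: share_def)

lemma shift_key_nth: "kl \<in> Keys \<Longrightarrow> c < h \<Longrightarrow> shift_key q \<delta> kl ! c = (kl ! c + \<delta> c) mod q"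
  by (simp add: shift_key_def Keys_def)

lemma shift_key_inj: "inj_on (shift_key q \<delta>) Keys"
proof (rule inj_onI)
  fix a b assume a: "a \<in> Keys" and b: "b \<in> Keys" and e: "shift_key q \<delta> a = shift_key q \<delta> b"
  show "a = b"
  proof (rule Keys_eqI[OF a b])
    fix c assume c: "c < h"
    then have "(a ! c + \<delta> c) mod q = (b ! c + \<delta> c) mod q"
      using arg_cong[OF e, of "\<lambda>l. l ! c"] a b by (simp add: shift_key_nth)
    then have "a ! c mod q = b ! c mod q" by (rule add_mod_cancel)
    then show "a ! c = b ! c" using Keys_nth[OF a c] Keys_nth[OF b c] by simp
  qed
qed

lemma shift_key_Keys: "shift_key q \<delta> ` Keys \<subseteq> Keys"
  using q_nontrivial by (auto simp: shift_key_def Keys_def)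

text \<open>Each S_i alone sees one key symbol and h - 1 symbols masked by distinct other key
  symbols: a shift of the key turns any message into the zero message.\<close>
lemma out_S_rekey:
  assumes i: "1 \<le> i" "i \<le> h"
  shows "\<exists>\<delta>. \<forall>kl\<in>Keys. out_S i (wl, kl) = out_S i (zero_msg, shift_key q \<delta> kl)"
proof (intro exI ballI)
  fix kl assume kl: "kl \<in> Keys"
  let ?\<delta> = "\<lambda>c. if c = i - 1 then 0 else share h wl i (unskip i c)"
  show "out_S i (wl, kl) = out_S i (zero_msg, shift_key q ?\<delta> kl)"
  proof (rule nth_equalityI)
    fix s assume "s < length (out_S i (wl, kl))"
    then have s: "s < h" by simp
    show "out_S i (wl, kl) ! s = out_S i (zero_msg, shift_key q ?\<delta> kl) ! s"
    proof (cases "s = 0")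
      case True
      then show ?thesis using s i kl by (simp add: out_S_nth shift_key_nth)
    next
      case False
      then have "skip i (s - 1) < h" using s by (intro skip_less) simp
      moreover have "share h zero_msg i (s - 1) = 0" using i s False by (intro share_zero_msg) auto
      moreover have "skip i (s - 1) \<noteq> i - 1" by (rule skip_ne) (use i in auto)
      ultimately show ?thesis using s i kl False
        by (simp add: out_S_nth shift_key_nth unskip_skip mod_simps add.commute)
    qed
  qed simp
qed

lemma comb_key_node [simp]: "comb i (Suc h) d = (snd d ! (i - 1)) mod q"
proof -
  have "(\<Sum>s<h. (if s = 0 then 1 else 0) * f s) = (f 0 :: nat)" for f
    using h_ge_2 by (simp add: if_distrib[of "\<lambda>x. x * _"] cong: if_cong)
  then show ?thesis using h_ge_2 by (simp add: comb_def relay_coef_def out_S_nth)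
qed

lemma comb_rekeyable_key_node: "comb_rekeyable (h + 1)"
  unfolding comb_rekeyable_def
proof (intro ballI exI[of _ "\<lambda>_. 0"] allI impI)
  fix wl kl i assume kl: "kl \<in> Keys" and i: "1 \<le> i \<and> i \<le> h"
  then have "i - 1 < h" by arith
  then show "comb i (h + 1) (wl, kl) = comb i (h + 1) (zero_msg, shift_key q (\<lambda>_. 0) kl)"
    using kl by (simp add: shift_key_nth)
qed

lemma view_low:
  assumes "e \<in> E" "snd e \<in> {SS j, AA j, BB j}" "j \<le> h" "out_S j d = out_S j d'"
  shows "flow d e = flow d' e"
  using assms by (auto simp: ccn_edges_def flow_def out_SA_low out_A_low)

lemma view_high:
  assumes "e \<in> E" "snd e \<in> {AA j, BB j}" "h < j"
    and "\<forall>i. 1 \<le> i \<and> i \<le> h \<longrightarrow> comb i j d = comb i j d'"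
  shows "flow d e = flow d' e"
  using assms by (auto simp: ccn_edges_def flow_def out_SA_high out_A_high)

lemma rekeyable_all:
  assumes high: "\<And>j. h + 1 < j \<Longrightarrow> j \<le> m \<Longrightarrow> comb_rekeyable j"
    and a: "a \<in> adversary_nodes m h"
  shows "rekeyable a"
proof -
  obtain j where j: "1 \<le> j" "a \<in> {SS j, AA j, BB j}" "h < j \<longrightarrow> a \<noteq> SS j \<and> j \<le> m"
    using a unfolding adversary_nodes_def by auto
  have "\<exists>\<delta>. \<forall>kl\<in>Keys. \<forall>e\<in>E. snd e = a \<longrightarrow> flow (wl, kl) e = flow (zero_msg, shift_key q \<delta> kl) e"
    if wl: "wl \<in> Msgs" for wl
  proof (cases "j \<le> h")
    case True
    then obtain \<delta> where "\<forall>kl\<in>Keys. out_S j (wl, kl) = out_S j (zero_msg, shift_key q \<delta> kl)"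
      using out_S_rekey j by blast
    then show ?thesis using view_low[of _ j] j True by blast
  next
    case False
    then have "a \<in> {AA j, BB j}" "h < j" using j by auto
    moreover have "comb_rekeyable j"
      using high[of j] comb_rekeyable_key_node j False by (cases "j = h + 1") auto
    then obtain \<delta> where "\<forall>kl\<in>Keys. \<forall>i. 1 \<le> i \<and> i \<le> h \<longrightarrow>
        comb i j (wl, kl) = comb i j (zero_msg, shift_key q \<delta> kl)"
      using wl unfolding comb_rekeyable_def by blast
    ultimately show ?thesis using view_high[of _ j] by blast
  qed
  then show ?thesis unfolding rekeyable_def using shift_key_inj shift_key_Keys by blast
qed

lemma out_S_key_symbol: "1 \<le> i \<Longrightarrow> i \<le> h \<Longrightarrow> kl \<in> Keys \<Longrightarrow> out_S i (wl, kl) ! 0 = kl ! (i - 1)"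
  using h_ge_2 by (simp add: out_S_nth Keys_nth)

lemma out_S_share_symbol:
  "t < h - 1 \<Longrightarrow> out_S i (wl, kl) ! Suc t = (share h wl i t + kl ! skip i t) mod q"
  by (simp add: out_S_nth)

text \<open>With a known key, all out_S but one determine the message: h - 1 blocks are read
  off directly and the missing one is recovered from their sum.\<close>
lemma msg_from_shares:
  assumes wl: "wl \<in> Msgs" "wl' \<in> Msgs" and i0: "1 \<le> i0" "i0 \<le> h"
    and X: "\<And>l. 1 \<le> l \<Longrightarrow> l \<le> h \<Longrightarrow> l \<noteq> i0 \<Longrightarrow> out_S l (wl, kl) = out_S l (wl', kl)"
  shows "wl = wl'"
proof -
  have sh: "share h wl l t mod q = share h wl' l t mod q"
    if l: "1 \<le> l" "l \<le> h" "l \<noteq> i0" and t: "t < h - 1" for l t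
  proof -
    have "out_S l (wl, kl) ! Suc t = out_S l (wl', kl) ! Suc t" using X l by simp
    then show ?thesis using t by (simp add: out_S_share_symbol) (rule add_mod_cancel)
  qed
  have symbol: "wl ! n = wl' ! n" if "wl ! n mod q = wl' ! n mod q" "n < (h - 1)^2" for n
    using that Msgs_nth wl by simp
  have block: "wl ! (b * (h - 1) + t) = wl' ! (b * (h - 1) + t)"
    if b: "b < h - 1" "b + 1 \<noteq> i0" and t: "t < h - 1" for b t
  proof (rule symbol)
    have "b + 1 < h" using b by arith
    then show "wl ! (b * (h - 1) + t) mod q = wl' ! (b * (h - 1) + t) mod q"
      using sh[of "b + 1" t] b t by (simp add: share_def)
  qed (rule msg_index_less[OF b(1) t])
  show ?thesis
  proof (rule Msgs_eqI[OF wl])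
    fix b t assume b: "b < h - 1" and t: "t < h - 1"
    show "wl ! (b * (h - 1) + t) = wl' ! (b * (h - 1) + t)"
    proof (cases "b + 1 = i0")
      case False then show ?thesis using block b t by blast
    next
      case True
      let ?rest = "\<lambda>w. \<Sum>b'\<in>{..<h - 1} - {b}. w ! (b' * (h - 1) + t)"
      have "share h wl h t mod q = share h wl' h t mod q" using sh[of h t] True b h_ge_2 t by simp
      moreover have "share h w h t = w ! (b * (h - 1) + t) + ?rest w" for w
        using sum.remove[of "{..<h - 1}" b "\<lambda>b'. w ! (b' * (h - 1) + t)"] b by (simp add: share_def)
      moreover have "?rest wl = ?rest wl'" using block t True by (intro sum.cong) auto
      ultimately have "(wl ! (b * (h - 1) + t) + ?rest wl) mod q = (wl' ! (b * (h - 1) + t) + ?rest wl) mod q"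
        by simp
      then have "wl ! (b * (h - 1) + t) mod q = wl' ! (b * (h - 1) + t) mod q" by (rule add_mod_cancel)
      then show ?thesis using msg_index_less[OF b t] by (rule symbol)
    qed
  qed
qed

text \<open>Receivers whose nodes lie among A_1, ..., A_(h+1) recover the key (from A_(h+1), or
  from the first symbols of A_1, ..., A_h) and then the message.\<close>
lemma decode_low:
  assumes T: "T \<in> receiver_sets m h" "T \<subseteq> {1..h+1}"
    and d: "wl \<in> Msgs" "kl \<in> Keys" "wl' \<in> Msgs" "kl' \<in> Keys"
    and Y: "\<forall>j\<in>T. out_A j (wl, kl) = out_A j (wl', kl')"
  shows "wl = wl'"
proof -
  have Tm: "T \<subseteq> {1..m}" "card T = h" using T by (auto simp: receiver_sets_def)
  have X: "out_S l (wl, kl) = out_S l (wl', kl')" if "l \<in> T" "l \<le> h" for l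
  proof -
    have "1 \<le> l" using that T(2) by auto
    then show ?thesis using Y that out_A_low[of l] by auto
  qed
  have "kl ! t = kl' ! t" if t: "t < h" for t
  proof (cases "h + 1 \<in> T")
    case True
    then have "out_A (h + 1) (wl, kl) = out_A (h + 1) (wl', kl')" "h + 1 \<le> m" using Y Tm by auto
    then have "comb (t + 1) (h + 1) (wl, kl) = comb (t + 1) (h + 1) (wl', kl')"
      using t by (simp add: out_A_high)
    then show ?thesis using t d Keys_nth[of kl t] Keys_nth[of kl' t] by simp
  next
    case False
    then have "T \<subseteq> {1..h}" using T(2) by (auto simp: subset_iff) (metis le_Suc_eq Suc_eq_plus1)
    then have "T = {1..h}" using Tm(2) by (intro card_subset_eq) auto
    then have "out_S (t + 1) (wl, kl) = out_S (t + 1) (wl', kl')" using X t by simp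
    then show ?thesis using out_S_key_symbol[of "t + 1" kl wl] out_S_key_symbol[of "t + 1" kl' wl'] t d
      by simp
  qed
  then have k: "kl = kl'" using Keys_eqI d by blast
  obtain i0 where "1 \<le> i0" "i0 \<le> h" "\<And>l. 1 \<le> l \<Longrightarrow> l \<le> h \<Longrightarrow> l \<noteq> i0 \<Longrightarrow> l \<in> T"
    using subset_misses_one[OF T(2) Tm(2)] h_ge_2 by auto
  then show ?thesis using msg_from_shares[OF d(1,3)] X k by metis
qed

end

lemma is_field_size_prime: "prime p \<Longrightarrow> is_field_size p"
  unfolding is_field_size_def by (intro exI[of _ p] exI[of _ 1]) simp

lemma rate_share_scheme: "h \<ge> 1 \<Longrightarrow> real ((h - 1)^2) / real h = (real h - 1)^2 / real h"
  by (simp add: of_nat_diff)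

text \<open>Case (ii): for m = h + 1 there are no extra nodes, and GF(2) suffices.\<close>
theorem achievable_m_eq_h_plus_1:
  assumes h: "h \<ge> 2"
  shows "\<exists>q N P. is_field_size q \<and> secure_protocol (h + 1) h q N P
                 \<and> secrecy_rate (h + 1) h q N P = (real h - 1)^2 / real h"
proof -
  interpret share_scheme "h + 1" h 2 "\<lambda>_ _ _. 0" using h by unfold_locales auto
  have "decodable"
    unfolding decodable_def
    using decode_low by (auto simp: receiver_sets_def)
  moreover have "rekeyable a" if "a \<in> adversary_nodes (h + 1) h" for a
    using rekeyable_all[OF _ that] by simp
  ultimately have "secure_protocol (h + 1) h 2 h prot \<and> secrecy_rate (h + 1) h 2 h prot = real ((h - 1)^2) / real h"
    by (rule keyed_scheme_secure)
  then show ?thesis using is_field_size_prime[of 2] rate_share_scheme h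
    by (intro exI[of _ 2] exI[of _ h] exI[of _ prot]) auto
qed

section \<open>Case h = 2: a prime field larger than m\<close>

lemma mod_eq_imp_int_dvd: "(a::nat) mod p = b mod p \<Longrightarrow> int p dvd int a - int b"
  by (metis mod_eq_dvd_iff of_nat_mod)

lemma prime_mult_cancel:
  assumes p: "prime (p::nat)" and c: "c \<noteq> 0" "\<bar>c\<bar> < int p"
    and dvd: "int p dvd c * (int w - int w')" and w: "w < p" "w' < p"
  shows "w = w'"
proof -
  have "\<not> int p dvd c"
  proof
    assume "int p dvd c"
    then have "\<bar>int p\<bar> \<le> \<bar>c\<bar>" using c(1) by (intro dvd_imp_le_int) auto
    then show False using c(2) by simp
  qed
  then have "int p dvd int w - int w'" using dvd p by (simp add: prime_dvd_mult_iff)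
  show "w = w'"
  proof (rule ccontr)
    assume "w \<noteq> w'"
    then have "\<bar>int p\<bar> \<le> \<bar>int w - int w'\<bar>" using \<open>int p dvd int w - int w'\<close> by (intro dvd_imp_le_int) auto
    then show False using w by linarith
  qed
qed

lemma mod_add_mult_mod: "(a + j * (x mod p)) mod p = (a + j * x) mod (p::nat)"
  by (metis mod_add_right_eq mod_mult_right_eq)

lemma sum_less_2: "(\<Sum>s<(2::nat). f s) = f 0 + (f 1 :: nat)"
  by (simp add: numeral_2_eq_2)

lemma upt_2: "[0..<2] = [0, 1::nat]"
  by (simp add: numeral_2_eq_2)

text \<open>For h = 2 the message is one symbol w and the key is (k1, k2); S_1 gets (k1, w + k2),
  S_2 gets (k2, w + k1), and A_j, j > 3, gets (k1 + j (w + k2), k2).\<close>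
definition coef_h2 :: "nat \<Rightarrow> nat \<Rightarrow> nat \<Rightarrow> nat" where
  "coef_h2 j i s = (if i = 1 then (if s = 0 then 1 else j) else (if s = 0 then 1 else 0))"

locale prime_field_scheme =
  fixes m p :: nat
  assumes m_ge_4: "m \<ge> 4" and p_prime: "prime p" and p_gt_m: "p > m"
begin

sublocale share_scheme m 2 p coef_h2
  using prime_gt_1_nat[OF p_prime] by unfold_locales auto

lemma out_S_1: "out_S (Suc 0) (wl, kl) = [kl ! 0 mod p, (wl ! 0 + kl ! 1) mod p]"
  by (rule nth_equalityI) (auto simp: out_S_nth share_def skip_def less_2_cases_iff)

lemma out_S_2: "out_S (Suc (Suc 0)) (wl, kl) = [kl ! 1 mod p, (wl ! 0 + kl ! 0) mod p]"
  by (rule nth_equalityI) (auto simp: out_S_nth share_def skip_def less_2_cases_iff)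

lemma comb_1: "j \<noteq> 3 \<Longrightarrow> comb (Suc 0) j (wl, kl) = (kl ! 0 + j * (wl ! 0 + kl ! 1)) mod p"
  by (simp add: comb_def relay_coef_def coef_h2_def sum_less_2 out_S_1 mod_simps mod_add_mult_mod)

lemma comb_2: "j \<noteq> 3 \<Longrightarrow> comb (Suc (Suc 0)) j (wl, kl) = kl ! 1 mod p"
  by (simp add: comb_def relay_coef_def coef_h2_def sum_less_2 out_S_2 mod_simps)

lemma out_A_extra:
  "3 < j \<Longrightarrow> j \<le> m \<Longrightarrow> out_A j (wl, kl) = [(kl ! 0 + j * (wl ! 0 + kl ! 1)) mod p, kl ! 1 mod p]"
  by (simp add: out_A_high upt_2 comb_1 comb_2)

lemma out_A_3: "out_A 3 (wl, kl) = [kl ! 0 mod p, kl ! 1 mod p]"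
proof -
  have "out_A (2 + 1) (wl, kl) = map (\<lambda>t. comb (t + 1) (2 + 1) (wl, kl)) [0..<2]"
    using m_ge_4 by (intro out_A_high) auto
  then show ?thesis using comb_key_node[of _ "(wl, kl)", simplified] by (simp add: upt_2)
qed

text \<open>A_j sees w only through k1 + j w: shift k1 by j w.\<close>
lemma comb_rekeyable_extra: "3 < j \<Longrightarrow> comb_rekeyable j"
  unfolding comb_rekeyable_def
proof (intro ballI exI[of _ "\<lambda>c. if c = 0 then j * wl ! 0 else 0" for wl] allI impI)
  fix wl kl and i :: nat assume j: "3 < j" and kl: "kl \<in> Keys" and i: "1 \<le> i \<and> i \<le> 2"
  let ?kl = "shift_key p (\<lambda>c. if c = 0 then j * wl ! 0 else 0) kl"
  have k0: "?kl ! 0 = (kl ! 0 + j * wl ! 0) mod p" and k1: "?kl ! 1 = kl ! 1 mod p"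
    using shift_key_nth[OF kl, of 0] shift_key_nth[OF kl, of 1] by simp_all
  have j3: "j \<noteq> 3" using j by simp
  have "kl ! 1 mod p = kl ! 1" using Keys_nth[OF kl, of 1] by simp
  then have "comb (Suc 0) j (wl, kl) = comb (Suc 0) j (zero_msg, ?kl)"
    "comb (Suc (Suc 0)) j (wl, kl) = comb (Suc (Suc 0)) j (zero_msg, ?kl)"
    unfolding comb_1[OF j3] comb_2[OF j3] k0 k1 by (simp_all add: mod_simps algebra_simps mod_add_mult_mod)
  moreover have "i = Suc 0 \<or> i = Suc (Suc 0)" using i by auto
  ultimately show "comb i j (wl, kl) = comb i j (zero_msg, ?kl)" by auto
qed

lemma Msgs_single: "wl \<in> Msgs \<Longrightarrow> wl = [wl ! 0]"
  unfolding Msgs_def by (cases wl) auto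

text \<open>A_j, j > 3, together with any other A_l yields c (w - w') = 0 for some c with
  0 < |c| \<le> m < p: c = 1, j - 1, j or j - l for l = 1, 2, 3 or l > 3.\<close>
lemma decode_with_extra:
  assumes j: "3 < j" "j \<le> m" and l: "1 \<le> l" "l \<le> m" "l \<noteq> j"
    and d: "wl \<in> Msgs" "kl \<in> Keys" "wl' \<in> Msgs" "kl' \<in> Keys"
    and Yj: "out_A j (wl, kl) = out_A j (wl', kl')" and Yl: "out_A l (wl, kl) = out_A l (wl', kl')"
  shows "wl = wl'"
proof -
  define w k1 k2 w' k1' k2' where "w = wl ! 0" "k1 = kl ! 0" "k2 = kl ! 1"
    "w' = wl' ! 0" "k1' = kl' ! 0" "k2' = kl' ! 1"
  note defs = w_k1_k2_w'_k1'_k2'_def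
  have lt: "w < p" "k1 < p" "k2 < p" "w' < p" "k1' < p" "k2' < p"
    using d Msgs_nth[of wl 0] Msgs_nth[of wl' 0] Keys_nth[of kl 0] Keys_nth[of kl 1]
      Keys_nth[of kl' 0] Keys_nth[of kl' 1] unfolding defs by auto
  let ?dw = "int w - int w'" and ?dk = "int k1 - int k1'"
  have k2: "k2 = k2'" using Yj lt unfolding out_A_extra[OF j] defs by simp
  have extra: "int p dvd ?dk + int j' * ?dw" if "3 < j'" "j' \<le> m"
    "out_A j' (wl, kl) = out_A j' (wl', kl')" for j'
  proof -
    have "(k1 + j' * (w + k2)) mod p = (k1' + j' * (w' + k2')) mod p"
      using that unfolding out_A_extra[OF that(1,2)] defs by simp
    then have "int p dvd int (k1 + j' * (w + k2)) - int (k1' + j' * (w' + k2'))" by (rule mod_eq_imp_int_dvd)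
    then show ?thesis using k2 by (simp add: algebra_simps)
  qed
  have Dj: "int p dvd ?dk + int j * ?dw" using extra[OF j Yj] .
  obtain c where c: "c \<noteq> 0" "\<bar>c\<bar> < int p" "int p dvd c * ?dw"
  proof -
    consider "l = 1" | "l = 2" | "l = 3" | "3 < l" using l by linarith
    then show thesis
    proof cases
      case 1
      then have "(w + k2) mod p = (w' + k2') mod p"
        using Yl out_S_1[of wl kl] out_S_1[of wl' kl'] out_A_low[of 1] unfolding defs by simp
      then have "w mod p = w' mod p" using k2 add_mod_cancel[of w k2 p w'] by simp
      then have "int p dvd 1 * ?dw" by (simp add: mod_eq_imp_int_dvd)
      then show thesis using that[of 1] p_gt_m m_ge_4 by simp
    next
      case 2
      then have "(w + k1) mod p = (w' + k1') mod p"
        using Yl out_S_2[of wl kl] out_S_2[of wl' kl'] out_A_low[of 2] unfolding defs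
        by (simp add: numeral_2_eq_2)
      then have "int p dvd ?dw + ?dk"
        using mod_eq_imp_int_dvd[of "w + k1" p "w' + k1'"] by (simp add: algebra_simps)
      with Dj have "int p dvd (?dk + int j * ?dw) - (?dw + ?dk)" by (rule dvd_diff)
      also have "(?dk + int j * ?dw) - (?dw + ?dk) = (int j - 1) * ?dw" by (simp add: algebra_simps)
      finally have "int p dvd (int j - 1) * ?dw" .
      then show thesis using that[of "int j - 1"] j p_gt_m by simp
    next
      case 3
      then have "k1 = k1'" using Yl lt out_A_3[of wl kl] out_A_3[of wl' kl'] unfolding defs by simp
      then have "int p dvd int j * ?dw" using Dj by simp
      then show thesis using that[of "int j"] j p_gt_m by simp
    next
      case 4
      then have "int p dvd ?dk + int l * ?dw" using extra[OF _ l(2) Yl] by blast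
      with Dj have "int p dvd (?dk + int j * ?dw) - (?dk + int l * ?dw)" by (rule dvd_diff)
      also have "(?dk + int j * ?dw) - (?dk + int l * ?dw) = (int j - int l) * ?dw"
        by (simp add: algebra_simps)
      finally have "int p dvd (int j - int l) * ?dw" .
      then show thesis using that[of "int j - int l"] j l p_gt_m by simp
    qed
  qed
  then have "w = w'" using prime_mult_cancel[OF p_prime c lt(1,4)] by blast
  then show ?thesis using Msgs_single[OF d(1)] Msgs_single[OF d(3)] unfolding defs by simp
qed

lemma decodable_h2: decodable
  unfolding decodable_def
proof (intro ballI allI impI, elim conjE)
  fix T and d d' :: "nat list \<times> nat list"
  assume T: "T \<in> receiver_sets m 2" and d: "fst d \<in> Msgs" "snd d \<in> Keys" "fst d' \<in> Msgs" "snd d' \<in> Keys"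
    and Y: "\<forall>j\<in>T. out_A j d = out_A j d'"
  obtain wl kl wl' kl' where dd: "d = (wl, kl)" "d' = (wl', kl')" by (cases d, cases d') auto
  have Tm: "T \<subseteq> {1..m}" "card T = 2" using T by (auto simp: receiver_sets_def)
  show "fst d = fst d'"
  proof (cases "T \<subseteq> {1..2+1}")
    case True then show ?thesis using decode_low[OF T True] d Y dd by simp
  next
    case False
    then obtain j where "j \<in> T" "j \<notin> {1..2+1}" by blast
    moreover have "j \<ge> 1" using Tm(1) \<open>j \<in> T\<close> by auto
    ultimately have j: "j \<in> T" "3 < j" by auto
    have "finite T" using Tm(1) finite_subset by blast
    then have "card (T - {j}) = 1" using Tm(2) j(1) by simp
    then obtain l where "T - {j} = {l}" by (meson card_1_singletonE)
    then have l: "l \<in> T" "l \<noteq> j" by auto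
    have "1 \<le> l" "l \<le> m" "j \<le> m" using Tm(1) l(1) j(1) by auto
    then show ?thesis using decode_with_extra[OF j(2) _ _ _ l(2)] Y j(1) l(1) d dd by simp
  qed
qed

end

theorem achievable_h_eq_2:
  assumes m: "m \<ge> 3"
  shows "\<exists>q N P. is_field_size q \<and> secure_protocol m 2 q N P
                 \<and> secrecy_rate m 2 q N P = (real 2 - 1)^2 / real 2"
proof (cases "m = 3")
  case True
  then show ?thesis using achievable_m_eq_h_plus_1[of 2] by simp
next
  case False
  obtain p :: nat where p: "prime p" "p > m" using bigger_prime by blast
  interpret prime_field_scheme m p using m False p by unfold_locales auto
  have "rekeyable a" if "a \<in> adversary_nodes m 2" for a
    using rekeyable_all[OF _ that] comb_rekeyable_extra by simp
  then have "secure_protocol m 2 p 2 prot \<and> secrecy_rate m 2 p 2 prot = real ((2 - 1)^2) / real 2"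
    using decodable_h2 by (intro keyed_scheme_secure)
  then show ?thesis using is_field_size_prime[OF p(1)] rate_share_scheme[of 2]
    by (intro exI[of _ p] exI[of _ 2] exI[of _ prot]) simp
qed

section \<open>Case h = 3, m \<le> 6: the binary field\<close>

lemma mod_2_eq_iff: "(x::nat) mod 2 = y mod 2 \<longleftrightarrow> (even x \<longleftrightarrow> even y)"
  by presburger

lemma sum_less_3: "(\<Sum>s<(3::nat). f s) = f 0 + f 1 + (f 2 :: nat)"
  by (simp add: numeral_3_eq_3 numeral_2_eq_2)

lemma list_length_3: "length l = 3 \<Longrightarrow> l = [l ! 0, l ! 1, l ! 2]"
  by (auto simp: numeral_3_eq_3 length_Suc_conv)

lemma upt_3: "[0..<3] = [0, 1, 2::nat]"
  by (simp add: numeral_3_eq_3)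

lemma card_3_sorted:
  assumes "finite T" "card T = 3"
  obtains x y z :: nat where "T = {x, y, z}" "x < y" "y < z"
proof -
  obtain l where l: "sorted_wrt (<) l" "set l = T" "length l = card T"
    using sorted_list_of_set.finite_set_strict_sorted[of T] assms(1) by auto
  then have L: "l = [l ! 0, l ! 1, l ! 2]" using assms(2) list_length_3 by simp
  then have "sorted_wrt (<) [l ! 0, l ! 1, l ! 2]" using l(1) by simp
  then have "l ! 0 < l ! 1" "l ! 1 < l ! 2" by auto
  moreover have "T = {l ! 0, l ! 1, l ! 2}" using l(2) L by (metis empty_set list.simps(15))
  ultimately show ?thesis using that by blast
qed

definition coef_h3 :: "nat \<Rightarrow> nat \<Rightarrow> nat \<Rightarrow> nat" where
  "coef_h3 j i s = (if j = 5 then (if i = 1 then [1,0,1] ! s else if i = 2 then [0,1,0] ! s else [1,1,1] ! s)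
                    else (if i = 1 then [1,1,1] ! s else if i = 2 then [0,0,1] ! s else [1,1,0] ! s))"

locale binary_scheme =
  fixes m :: nat
  assumes m_ge_5: "m \<ge> 5" and m_le_6: "m \<le> 6"
begin

sublocale share_scheme m 3 2 coef_h3 by unfold_locales auto

lemma out_S_1: "out_S 1 (wl, kl) = [kl ! 0 mod 2, (wl ! 0 + kl ! 1) mod 2, (wl ! 1 + kl ! 2) mod 2]"
  by (subst list_length_3, simp) (simp add: out_S_nth share_def skip_def; (simp add: numeral_2_eq_2)?)

lemma out_S_2: "out_S 2 (wl, kl) = [kl ! 1 mod 2, (wl ! 2 + kl ! 0) mod 2, (wl ! 3 + kl ! 2) mod 2]"
  by (subst list_length_3, simp) (simp add: out_S_nth share_def skip_def; (simp add: numeral_2_eq_2)?)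

lemma out_S_3:
  "out_S 3 (wl, kl) = [kl ! 2 mod 2, (wl ! 0 + wl ! 2 + kl ! 0) mod 2, (wl ! 1 + wl ! 3 + kl ! 1) mod 2]"
  by (subst list_length_3, simp)
     (simp add: out_S_nth share_def skip_def sum_less_2; (simp add: numeral_2_eq_2)?)

text \<open>The same with the indices 1 and 2 in the form produced by the simplifier.\<close>
lemma out_S_1': "out_S (Suc 0) (wl, kl) = [kl ! 0 mod 2, (wl ! 0 + kl ! 1) mod 2, (wl ! 1 + kl ! 2) mod 2]"
  using out_S_1 by simp

lemma out_S_2': "out_S (Suc (Suc 0)) (wl, kl) = [kl ! 1 mod 2, (wl ! 2 + kl ! 0) mod 2, (wl ! 3 + kl ! 2) mod 2]"
  using out_S_2 by (simp add: numeral_2_eq_2)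

lemma comb_Suc_Suc_0: "comb (Suc (Suc 0)) j d = comb 2 j d"
  by (simp add: numeral_2_eq_2)

lemma out_A_1: "out_A (Suc 0) (wl, kl) = [kl ! 0 mod 2, (wl ! 0 + kl ! 1) mod 2, (wl ! 1 + kl ! 2) mod 2]"
  using out_A_low[of 1] out_S_1 by simp

lemma out_A_2: "out_A 2 (wl, kl) = [kl ! 1 mod 2, (wl ! 2 + kl ! 0) mod 2, (wl ! 3 + kl ! 2) mod 2]"
  using out_A_low[of 2] out_S_2 by simp

lemma out_A_3:
  "out_A 3 (wl, kl) = [kl ! 2 mod 2, (wl ! 0 + wl ! 2 + kl ! 0) mod 2, (wl ! 1 + wl ! 3 + kl ! 1) mod 2]"
  using out_A_low[of 3] out_S_3 by simp

lemma out_A_4: "out_A 4 (wl, kl) = [kl ! 0 mod 2, kl ! 1 mod 2, kl ! 2 mod 2]"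
proof -
  have "out_A (3 + 1) (wl, kl) = map (\<lambda>t. comb (t + 1) (3 + 1) (wl, kl)) [0..<3]"
    using m_ge_5 by (intro out_A_high) auto
  then show ?thesis using comb_key_node[of _ "(wl, kl)", simplified] by (simp add: upt_3)
qed

lemma comb_5:
  "comb 1 5 (wl, kl) = (kl ! 0 + wl ! 1 + kl ! 2) mod 2"
  "comb 2 5 (wl, kl) = (wl ! 2 + kl ! 0) mod 2"
  "comb 3 5 (wl, kl) = (kl ! 2 + wl ! 0 + wl ! 2 + kl ! 0 + wl ! 1 + wl ! 3 + kl ! 1) mod 2"
  by (simp add: comb_def relay_coef_def coef_h3_def sum_less_3 out_S_1 out_S_1' out_S_2 out_S_2'
      out_S_3 mod_2_eq_iff even_add; argo?)+

lemma comb_6: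
  "comb 1 6 (wl, kl) = (kl ! 0 + wl ! 0 + kl ! 1 + wl ! 1 + kl ! 2) mod 2"
  "comb 2 6 (wl, kl) = (wl ! 3 + kl ! 2) mod 2"
  "comb 3 6 (wl, kl) = (kl ! 2 + wl ! 0 + wl ! 2 + kl ! 0) mod 2"
  by (simp add: comb_def relay_coef_def coef_h3_def sum_less_3 out_S_1 out_S_1' out_S_2 out_S_2'
      out_S_3 mod_2_eq_iff even_add; argo?)+

lemma out_A_5: "out_A 5 (wl, kl) = [(kl ! 0 + wl ! 1 + kl ! 2) mod 2, (wl ! 2 + kl ! 0) mod 2,
    (kl ! 2 + wl ! 0 + wl ! 2 + kl ! 0 + wl ! 1 + wl ! 3 + kl ! 1) mod 2]"
  using m_ge_5 by (simp add: out_A_high upt_3 comb_Suc_Suc_0 comb_5(1)[unfolded One_nat_def] comb_5(2,3))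

lemma out_A_6: "6 \<le> m \<Longrightarrow> out_A 6 (wl, kl) = [(kl ! 0 + wl ! 0 + kl ! 1 + wl ! 1 + kl ! 2) mod 2,
    (wl ! 3 + kl ! 2) mod 2, (kl ! 2 + wl ! 0 + wl ! 2 + kl ! 0) mod 2]"
  by (simp add: out_A_high upt_3 comb_Suc_Suc_0 comb_6(1)[unfolded One_nat_def] comb_6(2,3))

lemma shift_key_3:
  "kl \<in> Keys \<Longrightarrow> shift_key 2 (\<lambda>c. [x, y, z] ! c) kl = [(kl ! 0 + x) mod 2, (kl ! 1 + y) mod 2, (kl ! 2 + z) mod 2]"
  by (subst list_length_3) (simp_all add: shift_key_def Keys_def)

lemma comb_rekeyable_5: "comb_rekeyable 5"
  unfolding comb_rekeyable_def
proof (intro ballI exI[of _ "\<lambda>c. [wl ! 2, wl ! 0 + wl ! 2 + wl ! 3, wl ! 1 + wl ! 2] ! c" for wl] allI impI)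
  fix wl kl and i :: nat assume kl: "kl \<in> Keys" and i: "1 \<le> i \<and> i \<le> 3"
  let ?kl = "shift_key 2 (\<lambda>c. [wl ! 2, wl ! 0 + wl ! 2 + wl ! 3, wl ! 1 + wl ! 2] ! c) kl"
  have K: "?kl = [(kl ! 0 + ([wl ! 2, wl ! 0 + wl ! 2 + wl ! 3, wl ! 1 + wl ! 2] ! 0)) mod 2, (kl ! 1 + ([wl ! 2, wl ! 0 + wl ! 2 + wl ! 3, wl ! 1 + wl ! 2] ! 1)) mod 2, (kl ! 2 + ([wl ! 2, wl ! 0 + wl ! 2 + wl ! 3, wl ! 1 + wl ! 2] ! 2)) mod 2]"
    using shift_key_3[OF kl] by simp
  have Z: "zero_msg ! 0 = 0" "zero_msg ! 1 = 0" "zero_msg ! 2 = 0" "zero_msg ! 3 = 0" by simp_all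
  have "comb 1 5 (wl, kl) = comb 1 5 (zero_msg, ?kl)" "comb 2 5 (wl, kl) = comb 2 5 (zero_msg, ?kl)"
    "comb 3 5 (wl, kl) = comb 3 5 (zero_msg, ?kl)"
    unfolding comb_5 K Z by (simp add: mod_2_eq_iff even_add; argo?)+
  moreover have "i = 1 \<or> i = 2 \<or> i = 3" using i by auto
  ultimately show "comb i 5 (wl, kl) = comb i 5 (zero_msg, ?kl)" by auto
qed

lemma comb_rekeyable_6: "comb_rekeyable 6"
  unfolding comb_rekeyable_def
proof (intro ballI exI[of _ "\<lambda>c. [wl ! 0 + wl ! 2 + wl ! 3, wl ! 1 + wl ! 2, wl ! 3] ! c" for wl] allI impI)
  fix wl kl and i :: nat assume kl: "kl \<in> Keys" and i: "1 \<le> i \<and> i \<le> 3"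
  let ?kl = "shift_key 2 (\<lambda>c. [wl ! 0 + wl ! 2 + wl ! 3, wl ! 1 + wl ! 2, wl ! 3] ! c) kl"
  have K: "?kl = [(kl ! 0 + ([wl ! 0 + wl ! 2 + wl ! 3, wl ! 1 + wl ! 2, wl ! 3] ! 0)) mod 2, (kl ! 1 + ([wl ! 0 + wl ! 2 + wl ! 3, wl ! 1 + wl ! 2, wl ! 3] ! 1)) mod 2, (kl ! 2 + ([wl ! 0 + wl ! 2 + wl ! 3, wl ! 1 + wl ! 2, wl ! 3] ! 2)) mod 2]"
    using shift_key_3[OF kl] by simp
  have Z: "zero_msg ! 0 = 0" "zero_msg ! 1 = 0" "zero_msg ! 2 = 0" "zero_msg ! 3 = 0" by simp_all
  have "comb 1 6 (wl, kl) = comb 1 6 (zero_msg, ?kl)" "comb 2 6 (wl, kl) = comb 2 6 (zero_msg, ?kl)"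
    "comb 3 6 (wl, kl) = comb 3 6 (zero_msg, ?kl)"
    unfolding comb_6 K Z by (simp add: mod_2_eq_iff even_add; argo?)+
  moreover have "i = 1 \<or> i = 2 \<or> i = 3" using i by auto
  ultimately show "comb i 6 (wl, kl) = comb i 6 (zero_msg, ?kl)" by auto
qed

lemma Msgs_eq_parity:
  assumes "wl \<in> Msgs" "wl' \<in> Msgs" "\<And>n. n < 4 \<Longrightarrow> even (wl ! n) = even (wl' ! n)"
  shows "wl = wl'"
proof (rule nth_equalityI)
  show "length wl = length wl'" using assms(1,2) unfolding Msgs_def by simp
  fix n assume "n < length wl"
  then have n: "n < 4" using assms(1) unfolding Msgs_def by simp
  then have "wl ! n < 2" "wl' ! n < 2" using Msgs_nth assms(1,2) by auto
  then show "wl ! n = wl' ! n" using assms(3)[OF n] by presburger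
qed

lemmas out_A_eqs = out_A_1 out_A_2 out_A_3 out_A_4 out_A_5 out_A_6

lemma decode_extra:
  assumes xyz: "1 \<le> x" "x < y" "y < z" "5 \<le> z" "z \<le> m" and msgs: "wl \<in> Msgs" "wl' \<in> Msgs"
    and Y: "out_A x (wl, kl) = out_A x (wl', kl')" "out_A y (wl, kl) = out_A y (wl', kl')"
      "out_A z (wl, kl) = out_A z (wl', kl')"
  shows "wl = wl'"
proof (rule Msgs_eq_parity[OF msgs])
  have range: "z = 5 \<or> z = 6" "y = 2 \<or> y = 3 \<or> y = 4 \<or> y = 5" "x = 1 \<or> x = 2 \<or> x = 3 \<or> x = 4"
    using xyz m_le_6 by auto
  consider "x = 1" "y = 2" "z = 5" | "x = 1" "y = 2" "z = 6" | "x = 1" "y = 3" "z = 5" |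
    "x = 1" "y = 3" "z = 6" | "x = 1" "y = 4" "z = 5" | "x = 1" "y = 4" "z = 6" |
    "x = 1" "y = 5" "z = 6" | "x = 2" "y = 3" "z = 5" | "x = 2" "y = 3" "z = 6" |
    "x = 2" "y = 4" "z = 5" | "x = 2" "y = 4" "z = 6" | "x = 2" "y = 5" "z = 6" |
    "x = 3" "y = 4" "z = 5" | "x = 3" "y = 4" "z = 6" | "x = 3" "y = 5" "z = 6" |
    "x = 4" "y = 5" "z = 6"
    using range xyz(2,3) by (elim disjE) auto
  then have "even (wl ! 0) = even (wl' ! 0) \<and> even (wl ! 1) = even (wl' ! 1)
      \<and> even (wl ! 2) = even (wl' ! 2) \<and> even (wl ! 3) = even (wl' ! 3)"
  proof cases
    case 1 then show ?thesis using Y xyz(5) by (simp add: out_A_eqs mod_2_eq_iff) argo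
  next
    case 2 then show ?thesis using Y xyz(5) by (simp add: out_A_eqs mod_2_eq_iff) argo
  next
    case 3 then show ?thesis using Y xyz(5) by (simp add: out_A_eqs mod_2_eq_iff) argo
  next
    case 4 then show ?thesis using Y xyz(5) by (simp add: out_A_eqs mod_2_eq_iff) argo
  next
    case 5 then show ?thesis using Y xyz(5) by (simp add: out_A_eqs mod_2_eq_iff) argo
  next
    case 6 then show ?thesis using Y xyz(5) by (simp add: out_A_eqs mod_2_eq_iff) argo
  next
    case 7 then show ?thesis using Y xyz(5) by (simp add: out_A_eqs mod_2_eq_iff) argo
  next
    case 8 then show ?thesis using Y xyz(5) by (simp add: out_A_eqs mod_2_eq_iff) argo
  next
    case 9 then show ?thesis using Y xyz(5) by (simp add: out_A_eqs mod_2_eq_iff) argo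
  next
    case 10 then show ?thesis using Y xyz(5) by (simp add: out_A_eqs mod_2_eq_iff) argo
  next
    case 11 then show ?thesis using Y xyz(5) by (simp add: out_A_eqs mod_2_eq_iff) argo
  next
    case 12 then show ?thesis using Y xyz(5) by (simp add: out_A_eqs mod_2_eq_iff) argo
  next
    case 13 then show ?thesis using Y xyz(5) by (simp add: out_A_eqs mod_2_eq_iff) argo
  next
    case 14 then show ?thesis using Y xyz(5) by (simp add: out_A_eqs mod_2_eq_iff) argo
  next
    case 15 then show ?thesis using Y xyz(5) by (simp add: out_A_eqs mod_2_eq_iff) argo
  next
    case 16 then show ?thesis using Y xyz(5) by (simp add: out_A_eqs mod_2_eq_iff) argo
  qed
  moreover have "n = 0 \<or> n = 1 \<or> n = 2 \<or> n = 3" if "n < 4" for n :: nat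
    using that by auto
  ultimately show "even (wl ! n) = even (wl' ! n)" if "n < 4" for n
    using that by blast
qed

lemma decodable_h3: decodable
  unfolding decodable_def
proof (intro ballI allI impI, elim conjE)
  fix T and d d' :: "nat list \<times> nat list"
  assume T: "T \<in> receiver_sets m 3" and d: "fst d \<in> Msgs" "snd d \<in> Keys" "fst d' \<in> Msgs" "snd d' \<in> Keys"
    and Y: "\<forall>j\<in>T. out_A j d = out_A j d'"
  obtain wl kl wl' kl' where dd: "d = (wl, kl)" "d' = (wl', kl')" by (cases d, cases d') auto
  show "fst d = fst d'"
  proof (cases "T \<subseteq> {1..3+1}")
    case True then show ?thesis using decode_low[OF T True] d Y dd by simp
  next
    case False
    have Tm: "T \<subseteq> {1..m}" "card T = 3" using T by (auto simp: receiver_sets_def)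
    then obtain x y z where xyz: "T = {x, y, z}" "x < y" "y < z"
      using card_3_sorted finite_subset by (metis finite_atLeastAtMost)
    then have x: "1 \<le> x" and z: "z \<le> m" using Tm(1) by auto
    have five: "5 \<le> z" using False xyz x by auto
    have "wl = wl'"
      by (rule decode_extra[OF x xyz(2,3) five z]) (use d dd Y xyz(1) in auto)
    then show ?thesis using dd by simp
  qed
qed

end

theorem achievable_h_eq_3:
  assumes m: "m \<in> {4, 5, 6}"
  shows "\<exists>q N P. is_field_size q \<and> secure_protocol m 3 q N P
                 \<and> secrecy_rate m 3 q N P = (real 3 - 1)^2 / real 3"
proof (cases "m = 4")
  case True
  then show ?thesis using achievable_m_eq_h_plus_1[of 3] by simp
next
  case False
  interpret binary_scheme m using m False by unfold_locales auto
  have "rekeyable a" if "a \<in> adversary_nodes m 3" for a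
  proof (rule rekeyable_all[OF _ that])
    fix j assume "3 + 1 < j" "j \<le> m"
    then have "j = 5 \<or> j = 6" using m_le_6 by auto
    then show "comb_rekeyable j" using comb_rekeyable_5 comb_rekeyable_6 by auto
  qed
  then have "secure_protocol m 3 2 3 prot \<and> secrecy_rate m 3 2 3 prot = real ((3 - 1)^2) / real 3"
    using decodable_h3 by (intro keyed_scheme_secure)
  then show ?thesis using is_field_size_prime[of 2] rate_share_scheme[of 3]
    by (intro exI[of _ 2] exI[of _ 3] exI[of _ prot]) simp
qed

theorem lemma1:
  fixes m h :: nat
  assumes "(h = 2 \<and> m \<ge> 3) \<or> (h \<ge> 2 \<and> m = h + 1) \<or> (h = 3 \<and> m \<in> {4, 5, 6})"
  shows "\<exists>q N P. is_field_size q \<and> secure_protocol m h q N P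
                 \<and> secrecy_rate m h q N P = (real h - 1)^2 / real h"
  using assms
proof (elim disjE conjE)
  assume "h = 2" "m \<ge> 3"
  then show ?thesis using achievable_h_eq_2[of m] by simp
next
  assume "h \<ge> 2" "m = h + 1"
  then show ?thesis using achievable_m_eq_h_plus_1[of h] by simp
next
  assume "h = 3" "m \<in> {4, 5, 6}"
  then show ?thesis using achievable_h_eq_3[of m] by simp
qed

end
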